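(* Let $k$ be a field of characteristic zero, $h_0\in k\setminus\{0\}$, $\sigma\in\mathrm{Aut}_k(k[h])$ given by $\sigma(h)=h-h_0$, and let $a\in k[h]$ be a polynomial of degree $n>2$ which is reflective, i.e. there is $\rho\in k$ with $a(\rho-h)=(-1)^n a(h)$. Let $A=A(k[h],a,\sigma)$ be the generalized Weyl algebra and let $\Omega$ be the automorphism of $A$ with $\Omega(x)=y$, $\Omega(y)=(-1)^n x$, $\Omega(h)=h_0+\rho-h$. Let $\mathcal G\subset\mathrm{Aut}_k(A)$ be the subgroup generated by the torus automorphisms $\theta_w$ ($w\in k^*$) and the exponential automorphisms $\exp(\lambda\,\mathrm{ad}(x^m))$ and $\exp(\lambda\,\mathrm{ad}(y^m))$ for $\lambda\in k$, $m\geq 1$. Then $\Omega\notin\mathcal G$.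
   Context: For a $k$-algebra $R$, a central element $a\in R$ and $\sigma\in\mathrm{Aut}_k(R)$, the generalized Weyl algebra $A(R,a,\sigma)$ is the $k$-algebra generated by $R$ and two new variables $x,y$ subject to the relations $yx=a$, $xy=\sigma(a)$, $xr=\sigma(r)x$ and $ry=y\sigma(r)$ for all $r\in R$. For $w\in k^*$, $\theta_w$ is the automorphism of $A$ with $\theta_w(x)=wx$, $\theta_w(y)=w^{-1}y$, $\theta_w(h)=h$. For $u\in A$, $\mathrm{ad}(u)(b)=ub-bu$; the derivations $\mathrm{ad}(x^m)$ and $\mathrm{ad}(y^m)$ are locally nilpotent on $A$, so $\exp(\lambda\,\mathrm{ad}(u))=\sum_{i\geq0}\frac{\lambda^i}{i!}\mathrm{ad}(u)^i$ is a well-defined automorphism for $u=x^m$ or $u=y^m$. *)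

theory Defs
  imports "HOL-Computational_Algebra.Polynomial"
begin

text \<open>As a left k[h]-module A is free with basis v_i (i :: int),
 where v_i = x^i for i >= 0 and v_i = y^(-i) for i < 0.  An element
 sum_i r_i v_i is represented by the finitely supported function i \<mapsto> r_i.\<close>

definition gwa_carrier :: "(int \<Rightarrow> 'k::field poly) set" where
  "gwa_carrier = {f. finite {i. f i \<noteq> 0}}"

definition gwa_sig :: "'k::field \<Rightarrow> int \<Rightarrow> 'k poly \<Rightarrow> 'k poly" where
  "gwa_sig h0 i p = pcompose p [:- (of_int i * h0), 1:]"

text \<open>structure polynomials: v_i v_j = gwa_c i j v_(i+j)
 (x^i y^m = prod_{s=max 1 (i-m+1)}^{i} sigma^s(a) v_(i-m),
  y^m x^j = prod_{s=-m+1}^{min 0 (j-m)} sigma^s(a) v_(j-m))\<close>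
definition gwa_c :: "'k::field \<Rightarrow> 'k poly \<Rightarrow> int \<Rightarrow> int \<Rightarrow> 'k poly" where
  "gwa_c h0 a i j =
     (if 0 < i \<and> j < 0 then (\<Prod>s\<in>{max 1 (i + j + 1)..i}. gwa_sig h0 s a)
      else if i < 0 \<and> 0 < j then (\<Prod>s\<in>{i + 1..min 0 (i + j)}. gwa_sig h0 s a)
      else 1)"

text \<open>(r v_i)(s v_j) = r sigma^i(s) v_i v_j\<close>
definition gwa_mult :: "'k::field \<Rightarrow> 'k poly \<Rightarrow> (int \<Rightarrow> 'k poly) \<Rightarrow> (int \<Rightarrow> 'k poly) \<Rightarrow> (int \<Rightarrow> 'k poly)" where
  "gwa_mult h0 a f g = (\<lambda>k. \<Sum>i\<in>{i. f i \<noteq> 0}. f i * gwa_sig h0 i (g (k - i)) * gwa_c h0 a i (k - i))"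

definition gwa_add :: "(int \<Rightarrow> 'k::field poly) \<Rightarrow> (int \<Rightarrow> 'k poly) \<Rightarrow> (int \<Rightarrow> 'k poly)" where
  "gwa_add f g = (\<lambda>i. f i + g i)"

definition gwa_diff :: "(int \<Rightarrow> 'k::field poly) \<Rightarrow> (int \<Rightarrow> 'k poly) \<Rightarrow> (int \<Rightarrow> 'k poly)" where
  "gwa_diff f g = (\<lambda>i. f i - g i)"

definition gwa_smult :: "'k::field \<Rightarrow> (int \<Rightarrow> 'k poly) \<Rightarrow> (int \<Rightarrow> 'k poly)" where
  "gwa_smult c f = (\<lambda>i. smult c (f i))"

definition gwa_zero :: "int \<Rightarrow> 'k::field poly" where
  "gwa_zero = (\<lambda>i. 0)"

definition gwa_poly :: "'k::field poly \<Rightarrow> (int \<Rightarrow> 'k poly)" where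
  "gwa_poly p = (\<lambda>i. if i = 0 then p else 0)"

definition gwa_one :: "int \<Rightarrow> 'k::field poly" where
  "gwa_one = gwa_poly 1"

definition gwa_h :: "int \<Rightarrow> 'k::field poly" where
  "gwa_h = gwa_poly [:0, 1:]"

definition gwa_x :: "int \<Rightarrow> 'k::field poly" where
  "gwa_x = (\<lambda>i. if i = 1 then 1 else 0)"

definition gwa_y :: "int \<Rightarrow> 'k::field poly" where
  "gwa_y = (\<lambda>i. if i = -1 then 1 else 0)"

definition gwa_pow :: "'k::field \<Rightarrow> 'k poly \<Rightarrow> (int \<Rightarrow> 'k poly) \<Rightarrow> nat \<Rightarrow> (int \<Rightarrow> 'k poly)" where
  "gwa_pow h0 a u m = (gwa_mult h0 a u ^^ m) gwa_one"

definition gwa_aut :: "'k::field \<Rightarrow> 'k poly \<Rightarrow> ((int \<Rightarrow> 'k poly) \<Rightarrow> (int \<Rightarrow> 'k poly)) set" where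
  "gwa_aut h0 a = {\<phi>. bij_betw \<phi> gwa_carrier gwa_carrier \<and>
      (\<forall>f\<in>gwa_carrier. \<forall>g\<in>gwa_carrier.
          \<phi> (gwa_add f g) = gwa_add (\<phi> f) (\<phi> g) \<and>
          \<phi> (gwa_mult h0 a f g) = gwa_mult h0 a (\<phi> f) (\<phi> g)) \<and>
      (\<forall>c. \<forall>f\<in>gwa_carrier. \<phi> (gwa_smult c f) = gwa_smult c (\<phi> f)) \<and>
      \<phi> gwa_one = gwa_one}"

text \<open>torus automorphism theta_w: x \<mapsto> w x, y \<mapsto> w^-1 y, h \<mapsto> h, i.e. r v_i \<mapsto> w^i r v_i\<close>
definition gwa_theta :: "'k::field \<Rightarrow> (int \<Rightarrow> 'k poly) \<Rightarrow> (int \<Rightarrow> 'k poly)" where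
  "gwa_theta w f = (\<lambda>i. smult (w powi i) (f i))"

definition gwa_ad :: "'k::field \<Rightarrow> 'k poly \<Rightarrow> (int \<Rightarrow> 'k poly) \<Rightarrow> (int \<Rightarrow> 'k poly) \<Rightarrow> (int \<Rightarrow> 'k poly)" where
  "gwa_ad h0 a u b = gwa_diff (gwa_mult h0 a u b) (gwa_mult h0 a b u)"

text \<open>exp(lam ad(u)) b = sum_{i>=0} lam^i/i! ad(u)^i b, where the sum is finite
  because ad(u) is locally nilpotent (sum taken up to the first vanishing power)\<close>
definition gwa_exp_ad :: "'k::field_char_0 \<Rightarrow> 'k poly \<Rightarrow> 'k \<Rightarrow> (int \<Rightarrow> 'k poly) \<Rightarrow> (int \<Rightarrow> 'k poly) \<Rightarrow> (int \<Rightarrow> 'k poly)" where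
  "gwa_exp_ad h0 a lam u b =
     (let N = (LEAST N. (gwa_ad h0 a u ^^ N) b = gwa_zero) in
      (\<lambda>k. \<Sum>i\<le>N. smult (lam ^ i / fact i) (((gwa_ad h0 a u ^^ i) b) k)))"

definition gwa_generators :: "'k::field_char_0 \<Rightarrow> 'k poly \<Rightarrow> ((int \<Rightarrow> 'k poly) \<Rightarrow> (int \<Rightarrow> 'k poly)) set" where
  "gwa_generators h0 a =
     {gwa_theta w | w. w \<noteq> 0}
     \<union> {gwa_exp_ad h0 a lam (gwa_pow h0 a gwa_x m) | lam m. m \<ge> 1}
     \<union> {gwa_exp_ad h0 a lam (gwa_pow h0 a gwa_y m) | lam m. m \<ge> 1}"

inductive_set gen_group :: "'b set \<Rightarrow> ('b \<Rightarrow> 'b) set \<Rightarrow> ('b \<Rightarrow> 'b) set"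
  for C :: "'b set" and S :: "('b \<Rightarrow> 'b) set" where
  gen_id: "id \<in> gen_group C S"
| gen_mult: "g \<in> gen_group C S \<Longrightarrow> s \<in> S \<Longrightarrow> g \<circ> s \<in> gen_group C S"
| gen_inv: "g \<in> gen_group C S \<Longrightarrow> s \<in> S \<Longrightarrow> g \<circ> inv_into C s \<in> gen_group C S"

definition gwa_G :: "'k::field_char_0 \<Rightarrow> 'k poly \<Rightarrow> ((int \<Rightarrow> 'k poly) \<Rightarrow> (int \<Rightarrow> 'k poly)) set" where
  "gwa_G h0 a = gen_group gwa_carrier (gwa_generators h0 a)"

end

theory Submission
  imports Defs
begin

text \<open>Write elements of A as finite sums of r_i v_i with r_i in k[h], and call two
  elements congruent when their v_0-coefficients differ by an element of
  W = {\<sigma>(p) - p | a dvd p}. Every generator of G preserves congruence: \<theta>_w does not touch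
  the v_0-coefficient, and the v_0-coefficient of ad(v_j) b is, up to sign,
  \<sigma>^M(G) - G with M = |j| for some G all of whose shifts \<sigma>^t(G), 0 \<le> t < M, are divisible
  by a, so it telescopes into W. Since ad(v_j) is locally nilpotent, the exponentials are
  bijections of A, and so inverses of generators preserve congruence as well. Hence g(h) - h
  lies in W for every g in G. But \<Omega>(h) - h = h0 + \<rho> - 2h is a nonzero polynomial of
  degree 1, whereas \<sigma>(p) - p of degree at most 1 makes p'' invariant under \<sigma>, hence
  constant, so deg p \<le> 2 < deg a and p = 0.\<close>

lemma gwa_sig_0 [simp]: "gwa_sig h0 i 0 = 0"
  by (simp add: gwa_sig_def)

lemma gwa_sig_1 [simp]: "gwa_sig h0 i 1 = 1"
  by (simp add: gwa_sig_def pcompose_1)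

lemma gwa_sig_zero [simp]: "gwa_sig h0 0 p = p"
  by (simp add: gwa_sig_def)

lemma gwa_sig_add: "gwa_sig h0 i (p + q) = gwa_sig h0 i p + gwa_sig h0 i q"
  by (simp add: gwa_sig_def pcompose_add)

lemma gwa_sig_diff: "gwa_sig h0 i (p - q) = gwa_sig h0 i p - gwa_sig h0 i q"
  by (simp add: gwa_sig_def pcompose_diff)

lemma gwa_sig_smult: "gwa_sig h0 i (smult c p) = smult c (gwa_sig h0 i p)"
  by (simp add: gwa_sig_def pcompose_smult)

lemma gwa_sig_mult: "gwa_sig h0 i (p * q) = gwa_sig h0 i p * gwa_sig h0 i q"
  by (simp add: gwa_sig_def pcompose_mult)

lemma gwa_sig_prod: "gwa_sig h0 i (prod f A) = (\<Prod>x\<in>A. gwa_sig h0 i (f x))"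
  by (simp add: gwa_sig_def pcompose_prod)

lemma gwa_sig_gwa_sig: "gwa_sig h0 s (gwa_sig h0 t p) = gwa_sig h0 (s + t) p"
  unfolding gwa_sig_def pcompose_assoc[symmetric]
  by (simp add: pcompose_pCons algebra_simps)

lemma degree_gwa_sig [simp]: "degree (gwa_sig h0 i p) = degree p"
  by (simp add: gwa_sig_def degree_pcompose)

lemma lead_coeff_gwa_sig [simp]: "coeff (gwa_sig h0 i p) (degree p) = lead_coeff p"
  using lead_coeff_comp[of "[:- (of_int i * h0), 1:]" p] by (simp add: gwa_sig_def degree_pcompose)

lemma gwa_sig_eq_0_iff [simp]: "gwa_sig h0 i p = 0 \<longleftrightarrow> p = 0"
  by (metis gwa_sig_0 gwa_sig_gwa_sig gwa_sig_zero add.left_inverse)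

lemma pderiv_gwa_sig: "pderiv (gwa_sig h0 i p) = gwa_sig h0 i (pderiv p)"
  by (simp add: gwa_sig_def pderiv_pcompose pderiv_pCons)

definition overlap :: "int \<Rightarrow> int \<Rightarrow> nat" where
  "overlap i j = (if i * j < 0 then nat (min \<bar>i\<bar> \<bar>j\<bar>) else 0)"

lemma overlap_commute: "overlap i j = overlap j i"
  by (simp add: overlap_def mult.commute min.commute)

lemma gwa_c_eq_prod:
  obtains S where "finite S" "card S = overlap i j" "gwa_c h0 a i j = (\<Prod>s\<in>S. gwa_sig h0 s a)"
proof -
  consider "0 < i" "j < 0" | "i < 0" "0 < j" | "\<not> i * j < 0"
    by (auto simp: mult_less_0_iff)
  then show ?thesis
  proof cases
    case 1
    then have "i * j < 0" by (simp add: mult_pos_neg)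
    with 1 show ?thesis
      by (intro that[of "{max 1 (i + j + 1)..i}"]) (auto simp: gwa_c_def overlap_def)
  next
    case 2
    then have "i * j < 0" by (simp add: mult_neg_pos)
    with 2 show ?thesis
      by (intro that[of "{i + 1..min 0 (i + j)}"]) (auto simp: gwa_c_def overlap_def)
  next
    case 3
    then show ?thesis
      by (intro that[of "{}"]) (auto simp: gwa_c_def overlap_def mult_less_0_iff)
  qed
qed

lemma degree_gwa_c:
  assumes "a \<noteq> 0"
  shows "degree (gwa_c h0 a i j) = overlap i j * degree a"
proof -
  obtain S where "finite S" "card S = overlap i j" "gwa_c h0 a i j = (\<Prod>s\<in>S. gwa_sig h0 s a)"
    by (rule gwa_c_eq_prod)
  with assms show ?thesis by (simp add: degree_prod_sum_eq)
qed

lemma lead_coeff_gwa_c: "lead_coeff (gwa_c h0 a i j) = lead_coeff a ^ overlap i j"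
proof -
  obtain S where "finite S" "card S = overlap i j" "gwa_c h0 a i j = (\<Prod>s\<in>S. gwa_sig h0 s a)"
    by (rule gwa_c_eq_prod)
  then show ?thesis by (simp add: lead_coeff_prod)
qed

text \<open>In A, [v_j, r v_i] = (ad_coeff h0 a j i r) v_(i+j) (see \<open>gwa_ad_gwa_v\<close> below), so
  ad_v is ad(v_j) in coordinates, defined on all coefficient functions.\<close>

definition ad_coeff :: "'k::field \<Rightarrow> 'k poly \<Rightarrow> int \<Rightarrow> int \<Rightarrow> 'k poly \<Rightarrow> 'k poly" where
  "ad_coeff h0 a j i r = gwa_sig h0 j r * gwa_c h0 a j i - r * gwa_c h0 a i j"

definition ad_v :: "'k::field \<Rightarrow> 'k poly \<Rightarrow> int \<Rightarrow> (int \<Rightarrow> 'k poly) \<Rightarrow> (int \<Rightarrow> 'k poly)" where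
  "ad_v h0 a j b = (\<lambda>k. ad_coeff h0 a j (k - j) (b (k - j)))"

lemma degree_ad_coeff_less:
  fixes a :: "'k::field poly"
  assumes "a \<noteq> 0" and nz: "ad_coeff h0 a j i r \<noteq> 0"
  shows "degree (ad_coeff h0 a j i r) < degree r + overlap j i * degree a"
proof -
  let ?p = "gwa_sig h0 j r * gwa_c h0 a j i" and ?q = "r * gwa_c h0 a i j"
  have "r \<noteq> 0" using nz by (auto simp: ad_coeff_def)
  have "gwa_c h0 a j i \<noteq> 0" "gwa_c h0 a i j \<noteq> 0"
    using lead_coeff_gwa_c[of h0 a j i] lead_coeff_gwa_c[of h0 a i j] assms(1) by auto
  then have deg: "degree ?p = degree r + overlap j i * degree a" "degree ?q = degree ?p"
    using \<open>r \<noteq> 0\<close> assms(1) by (simp_all add: degree_mult_eq degree_gwa_c overlap_commute)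
  have "lead_coeff ?q = lead_coeff ?p"
    by (simp add: lead_coeff_mult lead_coeff_gwa_c overlap_commute)
  then have "coeff (?p - ?q) (degree ?p) = 0" using deg by simp
  moreover have "degree (?p - ?q) \<le> degree ?p"
    using degree_diff_le_max[of ?p ?q] deg by simp
  ultimately show ?thesis
    using eq_zero_or_degree_less nz deg by (fastforce simp: ad_coeff_def)
qed

definition opposite_dist :: "int \<Rightarrow> int \<Rightarrow> nat" where
  "opposite_dist j i = (if i * j < 0 then nat \<bar>i\<bar> else 0)"

lemma opposite_dist_add: "opposite_dist j (i + j) + overlap j i = opposite_dist j i"
  by (auto simp: opposite_dist_def overlap_def mult_less_0_iff)

text \<open>A potential for local nilpotency: one step of ad(v_j) raises the degree by less than
  overlap j i * deg a while opposite_dist drops by exactly overlap j i.\<close>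

definition ad_weight :: "'k::zero poly \<Rightarrow> int \<Rightarrow> 'k poly \<Rightarrow> int \<Rightarrow> nat" where
  "ad_weight a j r i = degree r + degree a * opposite_dist j i"

lemma ad_weight_ad_coeff_less:
  fixes a :: "'k::field poly"
  assumes "a \<noteq> 0" "ad_coeff h0 a j i r \<noteq> 0"
  shows "ad_weight a j (ad_coeff h0 a j i r) (i + j) < ad_weight a j r i"
  using degree_ad_coeff_less[OF assms]
  by (simp add: ad_weight_def algebra_simps flip: opposite_dist_add[of j i])

lemma funpow_ad_v_eq_0:
  fixes a :: "'k::field poly"
  assumes "a \<noteq> 0" "\<And>k. b k \<noteq> 0 \<Longrightarrow> ad_weight a j (b k) k < n"
  shows "(ad_v h0 a j ^^ n) b = gwa_zero"
  using assms(2)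
proof (induction n arbitrary: b)
  case 0
  then show ?case by (auto simp: gwa_zero_def)
next
  case (Suc n)
  have "ad_weight a j (ad_v h0 a j b k) k < n" if "ad_v h0 a j b k \<noteq> 0" for k
    using ad_weight_ad_coeff_less[OF assms(1), of h0 j "k - j" "b (k - j)"] Suc.prems[of "k - j"] that
    by (fastforce simp: ad_v_def ad_coeff_def)
  then have "(ad_v h0 a j ^^ n) (ad_v h0 a j b) = gwa_zero" by (rule Suc.IH)
  then show ?case by (simp add: funpow_Suc_right del: funpow.simps)
qed

lemma ad_v_locally_nilpotent:
  fixes a :: "'k::field poly"
  assumes "a \<noteq> 0" "b \<in> gwa_carrier"
  shows "\<exists>n. (ad_v h0 a j ^^ n) b = gwa_zero"
proof -
  let ?S = "{k. b k \<noteq> 0}"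
  have "finite ?S" using assms(2) by (simp add: gwa_carrier_def)
  then have "ad_weight a j (b k) k < Suc (\<Sum>k\<in>?S. ad_weight a j (b k) k)" if "b k \<noteq> 0" for k
    using member_le_sum[of k ?S "\<lambda>k. ad_weight a j (b k) k"] that by simp
  then show ?thesis using funpow_ad_v_eq_0[OF assms(1)] by blast
qed

lemma ad_coeff_0 [simp]: "ad_coeff h0 a j i 0 = 0"
  by (simp add: ad_coeff_def)

lemma ad_coeff_add: "ad_coeff h0 a j i (r + s) = ad_coeff h0 a j i r + ad_coeff h0 a j i s"
  by (simp add: ad_coeff_def gwa_sig_add algebra_simps)

lemma ad_coeff_diff: "ad_coeff h0 a j i (r - s) = ad_coeff h0 a j i r - ad_coeff h0 a j i s"
  by (simp add: ad_coeff_def gwa_sig_diff algebra_simps)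

lemma ad_coeff_smult: "ad_coeff h0 a j i (smult c r) = smult c (ad_coeff h0 a j i r)"
  by (simp add: ad_coeff_def gwa_sig_smult smult_diff_right)

lemma ad_coeff_sum_smult:
  "ad_coeff h0 a j i (\<Sum>l\<in>L. smult (c l) (F l)) = (\<Sum>l\<in>L. smult (c l) (ad_coeff h0 a j i (F l)))"
  by (induction L rule: infinite_finite_induct) (simp_all add: ad_coeff_add ad_coeff_smult)

lemma funpow_ad_v_zero: "(ad_v h0 a j ^^ n) gwa_zero = gwa_zero"
  by (induction n) (simp_all add: ad_v_def gwa_zero_def)

lemma funpow_ad_v_add:
  "(ad_v h0 a j ^^ n) (\<lambda>k. f k + g k) = (\<lambda>k. (ad_v h0 a j ^^ n) f k + (ad_v h0 a j ^^ n) g k)"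
  by (induction n) (simp_all add: ad_v_def ad_coeff_add)

lemma funpow_ad_v_diff:
  "(ad_v h0 a j ^^ n) (\<lambda>k. f k - g k) = (\<lambda>k. (ad_v h0 a j ^^ n) f k - (ad_v h0 a j ^^ n) g k)"
  by (induction n) (simp_all add: ad_v_def ad_coeff_diff)

lemma funpow_ad_v_sum_smult:
  "(ad_v h0 a j ^^ n) (\<lambda>k. \<Sum>l\<in>L. smult (c l) (F l k)) =
     (\<lambda>k. \<Sum>l\<in>L. smult (c l) ((ad_v h0 a j ^^ n) (F l) k))"
  by (induction n) (simp_all add: ad_v_def ad_coeff_sum_smult)

lemma gwa_carrier_add: "f \<in> gwa_carrier \<Longrightarrow> g \<in> gwa_carrier \<Longrightarrow> (\<lambda>k. f k + g k) \<in> gwa_carrier"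
  unfolding gwa_carrier_def
  by (auto intro: finite_subset[of _ "{k. f k \<noteq> 0} \<union> {k. g k \<noteq> 0}"])

lemma gwa_carrier_diff: "f \<in> gwa_carrier \<Longrightarrow> g \<in> gwa_carrier \<Longrightarrow> (\<lambda>k. f k - g k) \<in> gwa_carrier"
  unfolding gwa_carrier_def
  by (auto intro: finite_subset[of _ "{k. f k \<noteq> 0} \<union> {k. g k \<noteq> 0}"])

lemma gwa_carrier_sum_smult:
  assumes "finite L" "\<And>l. l \<in> L \<Longrightarrow> F l \<in> gwa_carrier"
  shows "(\<lambda>k. \<Sum>l\<in>L. smult (c l) (F l k)) \<in> gwa_carrier"
proof -
  have "{k. (\<Sum>l\<in>L. smult (c l) (F l k)) \<noteq> 0} \<subseteq> (\<Union>l\<in>L. {k. F l k \<noteq> 0})"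
    by (auto intro: ccontr sum.neutral)
  moreover have "finite (\<Union>l\<in>L. {k. F l k \<noteq> 0})"
    using assms by (auto simp: gwa_carrier_def)
  ultimately show ?thesis unfolding gwa_carrier_def by (auto intro: finite_subset)
qed

lemma ad_v_carrier: "b \<in> gwa_carrier \<Longrightarrow> ad_v h0 a j b \<in> gwa_carrier"
proof -
  assume "b \<in> gwa_carrier"
  moreover have "{k. ad_v h0 a j b k \<noteq> 0} \<subseteq> (\<lambda>i. i + j) ` {i. b i \<noteq> 0}"
  proof
    fix k assume "k \<in> {k. ad_v h0 a j b k \<noteq> 0}"
    then have "b (k - j) \<noteq> 0" by (auto simp: ad_v_def ad_coeff_def)
    then show "k \<in> (\<lambda>i. i + j) ` {i. b i \<noteq> 0}" by (intro image_eqI[of _ _ "k - j"]) auto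
  qed
  ultimately show ?thesis unfolding gwa_carrier_def by (auto intro: finite_subset)
qed

lemma funpow_ad_v_carrier: "b \<in> gwa_carrier \<Longrightarrow> (ad_v h0 a j ^^ n) b \<in> gwa_carrier"
  by (induction n) (simp_all add: ad_v_carrier)

definition exp_ad_v :: "'k::field_char_0 \<Rightarrow> 'k poly \<Rightarrow> int \<Rightarrow> 'k \<Rightarrow> (int \<Rightarrow> 'k poly) \<Rightarrow> (int \<Rightarrow> 'k poly)" where
  "exp_ad_v h0 a j lam f =
     (let N = (LEAST N. (ad_v h0 a j ^^ N) f = gwa_zero) in
      (\<lambda>k. \<Sum>i\<le>N. smult (lam ^ i / fact i) ((ad_v h0 a j ^^ i) f k)))"

lemma funpow_ad_v_eq_0_mono:
  assumes "(ad_v h0 a j ^^ n) f = gwa_zero" "n \<le> m"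
  shows "(ad_v h0 a j ^^ m) f = gwa_zero"
proof -
  have "(ad_v h0 a j ^^ m) f = (ad_v h0 a j ^^ (m - n)) ((ad_v h0 a j ^^ n) f)"
    using assms(2) funpow_add[of "m - n" n "ad_v h0 a j"] by simp
  then show ?thesis using assms(1) by (simp add: funpow_ad_v_zero)
qed

lemma exp_ad_v_eq_sum:
  assumes "(ad_v h0 a j ^^ M) f = gwa_zero"
  shows "exp_ad_v h0 a j lam f = (\<lambda>k. \<Sum>i\<le>M. smult (lam ^ i / fact i) ((ad_v h0 a j ^^ i) f k))"
proof -
  let ?N = "LEAST N. (ad_v h0 a j ^^ N) f = gwa_zero"
  have "(ad_v h0 a j ^^ ?N) f = gwa_zero" by (rule LeastI[of _ M]) (rule assms)
  then have "(ad_v h0 a j ^^ i) f = gwa_zero" if "?N \<le> i" for i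
    using funpow_ad_v_eq_0_mono that by blast
  moreover have "?N \<le> M" by (rule Least_le) (rule assms)
  ultimately show ?thesis
    unfolding exp_ad_v_def Let_def
    by (intro ext sum.mono_neutral_left) (auto simp: gwa_zero_def)
qed

lemma exp_ad_v_carrier: "f \<in> gwa_carrier \<Longrightarrow> exp_ad_v h0 a j lam f \<in> gwa_carrier"
  unfolding exp_ad_v_def Let_def by (intro gwa_carrier_sum_smult funpow_ad_v_carrier) auto

lemma exp_ad_v_add:
  assumes "(ad_v h0 a j ^^ M) f = gwa_zero" "(ad_v h0 a j ^^ M) g = gwa_zero"
  shows "exp_ad_v h0 a j lam (\<lambda>k. f k + g k) = (\<lambda>k. exp_ad_v h0 a j lam f k + exp_ad_v h0 a j lam g k)"
proof -
  have sum_nil: "(ad_v h0 a j ^^ M) (\<lambda>k. f k + g k) = gwa_zero"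
    using assms by (simp add: funpow_ad_v_add gwa_zero_def)
  show ?thesis
    unfolding exp_ad_v_eq_sum[OF assms(1)] exp_ad_v_eq_sum[OF assms(2)] exp_ad_v_eq_sum[OF sum_nil]
    by (simp add: funpow_ad_v_add smult_add_right sum.distrib)
qed

lemma funpow_ad_v_exp_ad_v:
  assumes "(ad_v h0 a j ^^ Suc n) f = gwa_zero"
  shows "(ad_v h0 a j ^^ n) (exp_ad_v h0 a j lam f) = (ad_v h0 a j ^^ n) f"
proof -
  have vanish: "(ad_v h0 a j ^^ (n + i)) f = gwa_zero" if "i \<noteq> 0" for i
    using funpow_ad_v_eq_0_mono[OF assms] that by simp
  have "(ad_v h0 a j ^^ n) (exp_ad_v h0 a j lam f) =
        (\<lambda>k. \<Sum>i\<le>Suc n. smult (lam ^ i / fact i) ((ad_v h0 a j ^^ (n + i)) f k))"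
    unfolding exp_ad_v_eq_sum[OF assms] funpow_ad_v_sum_smult by (simp add: funpow_add)
  also have "\<dots> = (\<lambda>k. \<Sum>i\<in>{0}. smult (lam ^ i / fact i) ((ad_v h0 a j ^^ (n + i)) f k))"
    by (intro ext sum.mono_neutral_right) (auto simp: vanish gwa_zero_def)
  finally show ?thesis by simp
qed

lemma exp_ad_v_surj_nilpotent:
  assumes "f \<in> gwa_carrier" "(ad_v h0 a j ^^ n) f = gwa_zero"
  shows "\<exists>z\<in>gwa_carrier. (ad_v h0 a j ^^ n) z = gwa_zero \<and> exp_ad_v h0 a j lam z = f"
  using assms
proof (induction n arbitrary: f)
  case 0
  then have "exp_ad_v h0 a j lam gwa_zero = f"
    using exp_ad_v_eq_sum[where M = 0 and f = gwa_zero] by (simp add: gwa_zero_def)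
  then show ?case using 0 by (intro bexI[of _ gwa_zero]) (auto simp: gwa_carrier_def gwa_zero_def)
next
  case (Suc n)
  define g where "g = (\<lambda>k. f k - exp_ad_v h0 a j lam f k)"
  have "g \<in> gwa_carrier"
    unfolding g_def using Suc.prems(1) by (intro gwa_carrier_diff exp_ad_v_carrier)
  moreover have "(ad_v h0 a j ^^ n) g = gwa_zero"
    unfolding g_def funpow_ad_v_diff funpow_ad_v_exp_ad_v[OF Suc.prems(2)] by (simp add: gwa_zero_def)
  ultimately obtain z where z: "z \<in> gwa_carrier" "(ad_v h0 a j ^^ n) z = gwa_zero"
      "exp_ad_v h0 a j lam z = g"
    using Suc.IH by blast
  then have z_Suc: "(ad_v h0 a j ^^ Suc n) z = gwa_zero"
    using funpow_ad_v_eq_0_mono[OF z(2), where m = "Suc n"] by simp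
  have "exp_ad_v h0 a j lam (\<lambda>k. f k + z k) = f"
    unfolding exp_ad_v_add[OF Suc.prems(2) z_Suc] z(3) g_def by simp
  moreover have "(ad_v h0 a j ^^ Suc n) (\<lambda>k. f k + z k) = gwa_zero"
    unfolding funpow_ad_v_add Suc.prems(2) z_Suc by (simp add: gwa_zero_def)
  ultimately show ?case
    using gwa_carrier_add[OF Suc.prems(1) z(1)] by blast
qed

lemma exp_ad_v_image:
  fixes a :: "'k::field_char_0 poly"
  assumes "a \<noteq> 0"
  shows "exp_ad_v h0 a j lam ` gwa_carrier = gwa_carrier"
proof
  show "exp_ad_v h0 a j lam ` gwa_carrier \<subseteq> gwa_carrier" by (auto intro: exp_ad_v_carrier)
  show "gwa_carrier \<subseteq> exp_ad_v h0 a j lam ` gwa_carrier"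
  proof
    fix f :: "int \<Rightarrow> 'k poly" assume f: "f \<in> gwa_carrier"
    obtain n where "(ad_v h0 a j ^^ n) f = gwa_zero"
      using ad_v_locally_nilpotent[OF assms f] by blast
    with exp_ad_v_surj_nilpotent[OF f] show "f \<in> exp_ad_v h0 a j lam ` gwa_carrier"
      by (metis image_eqI)
  qed
qed

definition coboundaries :: "'k::field \<Rightarrow> 'k poly \<Rightarrow> 'k poly set" where
  "coboundaries h0 a = {gwa_sig h0 1 p - p | p. a dvd p}"

lemma coboundaries_0 [simp]: "0 \<in> coboundaries h0 a"
  unfolding coboundaries_def by force

lemma coboundaries_add:
  assumes "p \<in> coboundaries h0 a" "q \<in> coboundaries h0 a"
  shows "p + q \<in> coboundaries h0 a"
proof -
  obtain p' q' where "a dvd p'" "a dvd q'" "p = gwa_sig h0 1 p' - p'" "q = gwa_sig h0 1 q' - q'"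
    using assms unfolding coboundaries_def by blast
  then show ?thesis
    unfolding coboundaries_def by (intro CollectI exI[of _ "p' + q'"]) (auto simp: gwa_sig_add)
qed

lemma coboundaries_smult:
  assumes "p \<in> coboundaries h0 a"
  shows "smult c p \<in> coboundaries h0 a"
proof -
  obtain p' where "a dvd p'" "p = gwa_sig h0 1 p' - p'"
    using assms unfolding coboundaries_def by blast
  then show ?thesis
    unfolding coboundaries_def
    by (intro CollectI exI[of _ "smult c p'"]) (auto simp: gwa_sig_smult smult_diff_right dvd_smult)
qed

lemma coboundaries_uminus: "p \<in> coboundaries h0 a \<Longrightarrow> - p \<in> coboundaries h0 a"
  using coboundaries_smult[of p h0 a "- 1"] by simp

lemma coboundaries_sum: "(\<And>l. l \<in> L \<Longrightarrow> F l \<in> coboundaries h0 a) \<Longrightarrow> (\<Sum>l\<in>L. F l) \<in> coboundaries h0 a"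
  by (induction L rule: infinite_finite_induct) (simp_all add: coboundaries_add)

lemma gwa_sig_diff_in_coboundaries:
  assumes "\<And>t. t < M \<Longrightarrow> a dvd gwa_sig h0 (int t) G"
  shows "gwa_sig h0 (int M) G - G \<in> coboundaries h0 a"
proof -
  have "gwa_sig h0 (int M) G - G = (\<Sum>t<M. gwa_sig h0 (int (Suc t)) G - gwa_sig h0 (int t) G)"
    by (subst sum_lessThan_telescope) simp
  also have "\<dots> = (\<Sum>t<M. gwa_sig h0 1 (gwa_sig h0 (int t) G) - gwa_sig h0 (int t) G)"
    by (simp add: gwa_sig_gwa_sig add.commute)
  also have "\<dots> \<in> coboundaries h0 a"
    using assms by (intro coboundaries_sum) (auto simp: coboundaries_def)
  finally show ?thesis .
qed

lemma gwa_sig_gwa_c_neg: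
  "gwa_sig h0 (int M) (gwa_c h0 a (- int M) (int M)) = gwa_c h0 a (int M) (- int M)"
proof (cases "M = 0")
  case False
  have "gwa_sig h0 (int M) (gwa_c h0 a (- int M) (int M)) = (\<Prod>s\<in>{- int M + 1..0}. gwa_sig h0 (int M + s) a)"
    using False by (simp add: gwa_c_def gwa_sig_prod gwa_sig_gwa_sig)
  also have "\<dots> = (\<Prod>s\<in>(\<lambda>s. s + int M) ` {- int M + 1..0}. gwa_sig h0 s a)"
    by (subst prod.reindex) (auto simp: add.commute)
  also have "(\<lambda>s. s + int M) ` {- int M + 1..0} = {1..int M}" by simp
  finally show ?thesis using False by (simp add: gwa_c_def)
qed (simp add: gwa_c_def)

lemma dvd_gwa_sig_gwa_c_neg:
  assumes "t < M"
  shows "a dvd gwa_sig h0 (int t) (gwa_c h0 a (- int M) (int M))"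
proof -
  have "a = gwa_sig h0 (int t + - int t) a" by simp
  also have "\<dots> dvd (\<Prod>s\<in>{- int M + 1..0}. gwa_sig h0 (int t + s) a)"
    using assms by (intro dvd_prodI) auto
  also have "\<dots> = gwa_sig h0 (int t) (gwa_c h0 a (- int M) (int M))"
    using assms by (simp add: gwa_c_def gwa_sig_prod gwa_sig_gwa_sig)
  finally show ?thesis .
qed

lemma ad_v_coeff0_in_coboundaries: "ad_v h0 a j b 0 \<in> coboundaries h0 a"
proof -
  obtain M where "j = int M \<or> j = - int M" by (metis int_cases2)
  then show ?thesis
  proof
    assume j: "j = int M"
    let ?G = "b (- int M) * gwa_c h0 a (- int M) (int M)"
    have "ad_v h0 a j b 0 = gwa_sig h0 (int M) ?G - ?G"
      by (simp add: j ad_v_def ad_coeff_def gwa_sig_mult gwa_sig_gwa_c_neg)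
    also have "\<dots> \<in> coboundaries h0 a"
      by (intro gwa_sig_diff_in_coboundaries) (simp add: gwa_sig_mult dvd_gwa_sig_gwa_c_neg)
    finally show ?thesis .
  next
    assume j: "j = - int M"
    let ?H = "gwa_sig h0 (- int M) (b (int M)) * gwa_c h0 a (- int M) (int M)"
    have "ad_v h0 a j b 0 = - (gwa_sig h0 (int M) ?H - ?H)"
      by (simp add: j ad_v_def ad_coeff_def gwa_sig_mult gwa_sig_gwa_sig gwa_sig_gwa_c_neg)
    also have "\<dots> \<in> coboundaries h0 a"
      by (intro coboundaries_uminus gwa_sig_diff_in_coboundaries)
        (simp add: gwa_sig_mult dvd_gwa_sig_gwa_c_neg)
    finally show ?thesis .
  qed
qed

lemma exp_ad_v_coeff0: "exp_ad_v h0 a j lam f 0 - f 0 \<in> coboundaries h0 a"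
proof -
  define N where "N = (LEAST N. (ad_v h0 a j ^^ N) f = gwa_zero)"
  have "exp_ad_v h0 a j lam f 0 - f 0 =
        (\<Sum>i<N. smult (lam ^ Suc i / fact (Suc i)) (ad_v h0 a j ((ad_v h0 a j ^^ i) f) 0))"
    by (simp add: exp_ad_v_def N_def[symmetric] sum.atMost_shift)
  also have "\<dots> \<in> coboundaries h0 a"
    by (intro coboundaries_sum coboundaries_smult ad_v_coeff0_in_coboundaries)
  finally show ?thesis .
qed

definition gwa_v :: "int \<Rightarrow> int \<Rightarrow> 'k::field poly" where
  "gwa_v j = (\<lambda>i. if i = j then 1 else 0)"

lemma gwa_mult_gwa_v_left:
  "gwa_mult h0 a (gwa_v j) b = (\<lambda>k. gwa_sig h0 j (b (k - j)) * gwa_c h0 a j (k - j))"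
proof -
  have "{i. gwa_v j i \<noteq> (0 :: 'a poly)} = {j}" by (auto simp: gwa_v_def)
  then show ?thesis by (simp add: gwa_mult_def gwa_v_def)
qed

lemma gwa_mult_gwa_v_right:
  assumes "b \<in> gwa_carrier"
  shows "gwa_mult h0 a b (gwa_v j) = (\<lambda>k. b (k - j) * gwa_c h0 a (k - j) j)"
proof
  fix k
  have "gwa_mult h0 a b (gwa_v j) k =
        (\<Sum>i\<in>{i. b i \<noteq> 0}. if i = k - j then b i * gwa_c h0 a i j else 0)"
    unfolding gwa_mult_def by (intro sum.cong) (auto simp: gwa_v_def)
  also have "\<dots> = b (k - j) * gwa_c h0 a (k - j) j"
    using assms by (simp add: gwa_carrier_def)
  finally show "gwa_mult h0 a b (gwa_v j) k = b (k - j) * gwa_c h0 a (k - j) j" .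
qed

lemma gwa_ad_gwa_v: "b \<in> gwa_carrier \<Longrightarrow> gwa_ad h0 a (gwa_v j) b = ad_v h0 a j b"
  by (simp add: gwa_ad_def gwa_diff_def ad_v_def ad_coeff_def gwa_mult_gwa_v_left gwa_mult_gwa_v_right)

lemma gwa_exp_ad_gwa_v: "f \<in> gwa_carrier \<Longrightarrow> gwa_exp_ad h0 a lam (gwa_v j) f = exp_ad_v h0 a j lam f"
proof -
  assume "f \<in> gwa_carrier"
  then have "(gwa_ad h0 a (gwa_v j) ^^ n) f = (ad_v h0 a j ^^ n) f" for n
    by (induction n) (simp_all add: gwa_ad_gwa_v funpow_ad_v_carrier)
  then show ?thesis by (simp add: gwa_exp_ad_def exp_ad_v_def)
qed

lemma gwa_pow_gwa_x: "gwa_pow h0 a gwa_x m = gwa_v (int m)"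
proof (induction m)
  case (Suc m)
  have "gwa_pow h0 a gwa_x (Suc m) = gwa_mult h0 a (gwa_v 1) (gwa_v (int m))"
    using Suc by (simp add: gwa_pow_def gwa_x_def gwa_v_def)
  then show ?case unfolding gwa_mult_gwa_v_left by (auto simp: gwa_v_def gwa_c_def)
qed (auto simp: gwa_pow_def gwa_one_def gwa_poly_def gwa_v_def)

lemma gwa_pow_gwa_y: "gwa_pow h0 a gwa_y m = gwa_v (- int m)"
proof (induction m)
  case (Suc m)
  have "gwa_pow h0 a gwa_y (Suc m) = gwa_mult h0 a (gwa_v (- 1)) (gwa_v (- int m))"
    using Suc by (simp add: gwa_pow_def gwa_y_def gwa_v_def)
  then show ?case unfolding gwa_mult_gwa_v_left by (auto simp: gwa_v_def gwa_c_def)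
qed (auto simp: gwa_pow_def gwa_one_def gwa_poly_def gwa_v_def)

lemma gwa_theta_image:
  fixes w :: "'k::field"
  assumes "w \<noteq> 0"
  shows "gwa_theta w ` gwa_carrier = gwa_carrier"
proof -
  have carrier: "gwa_theta u f \<in> gwa_carrier" if "f \<in> gwa_carrier" for u :: 'k and f
    using that unfolding gwa_carrier_def gwa_theta_def
    by (auto intro: finite_subset[of _ "{i. f i \<noteq> 0}"])
  have "gwa_theta w (gwa_theta (inverse w) f) = f" for f :: "int \<Rightarrow> 'k poly"
    using assms by (simp add: gwa_theta_def power_int_inverse[symmetric] power_int_mult_distrib[symmetric])
  then have "f \<in> gwa_theta w ` gwa_carrier" if "f \<in> gwa_carrier" for f
    using carrier[OF that] by (intro image_eqI[of _ _ "gwa_theta (inverse w) f"]) simp_all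
  with carrier show ?thesis by blast
qed

definition coeff0_cong :: "'k::field \<Rightarrow> 'k poly \<Rightarrow> (int \<Rightarrow> 'k poly) \<Rightarrow> (int \<Rightarrow> 'k poly) \<Rightarrow> bool" where
  "coeff0_cong h0 a f g \<longleftrightarrow> g 0 - f 0 \<in> coboundaries h0 a"

lemma equivp_coeff0_cong: "equivp (coeff0_cong h0 a)"
proof (rule equivpI)
  show "reflp (coeff0_cong h0 a)" by (simp add: reflp_def coeff0_cong_def)
  show "symp (coeff0_cong h0 a)"
    using coboundaries_uminus by (fastforce simp: symp_def coeff0_cong_def)
  show "transp (coeff0_cong h0 a)"
    using coboundaries_add by (fastforce simp: transp_def coeff0_cong_def)
qed

lemma gen_group_invariant:
  assumes "equivp R" and gen: "\<And>s. s \<in> S \<Longrightarrow> s ` C = C \<and> (\<forall>f\<in>C. R f (s f))"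
    and "g \<in> gen_group C S"
  shows "\<forall>f\<in>C. g f \<in> C \<and> R f (g f)"
  using assms(3)
proof (induction rule: gen_group.induct)
  case gen_id
  then show ?case using equivp_reflp[OF assms(1)] by simp
next
  case (gen_mult g s)
  show ?case
  proof
    fix f assume "f \<in> C"
    then have "s f \<in> C" "R f (s f)" using gen[OF gen_mult.hyps(2)] by auto
    then show "(g \<circ> s) f \<in> C \<and> R f ((g \<circ> s) f)"
      using gen_mult.IH equivp_transp[OF assms(1)] by auto
  qed
next
  case (gen_inv g s)
  show ?case
  proof
    fix f assume "f \<in> C"
    then have f: "f \<in> s ` C" using gen[OF gen_inv.hyps(2)] by simp
    let ?z = "inv_into C s f"
    have z: "?z \<in> C" "s ?z = f" using f by (auto intro: inv_into_into f_inv_into_f)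
    then have "R f ?z" using gen[OF gen_inv.hyps(2)] equivp_symp[OF assms(1)] by metis
    moreover have "g ?z \<in> C" "R ?z (g ?z)" using gen_inv.IH z(1) by auto
    ultimately show "(g \<circ> inv_into C s) f \<in> C \<and> R f ((g \<circ> inv_into C s) f)"
      using equivp_transp[OF assms(1)] by auto
  qed
qed

lemma gwa_generators_preserve_coeff0_cong:
  fixes a :: "'k::field_char_0 poly"
  assumes "a \<noteq> 0" "s \<in> gwa_generators h0 a"
  shows "s ` gwa_carrier = gwa_carrier \<and> (\<forall>f\<in>gwa_carrier. coeff0_cong h0 a f (s f))"
proof -
  have exp: "gwa_exp_ad h0 a lam (gwa_v j) ` gwa_carrier = gwa_carrier \<and>
      (\<forall>f\<in>gwa_carrier. coeff0_cong h0 a f (gwa_exp_ad h0 a lam (gwa_v j) f))" for lam j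
  proof
    have "gwa_exp_ad h0 a lam (gwa_v j) ` gwa_carrier = exp_ad_v h0 a j lam ` gwa_carrier"
      by (rule image_cong) (simp_all add: gwa_exp_ad_gwa_v)
    then show "gwa_exp_ad h0 a lam (gwa_v j) ` gwa_carrier = gwa_carrier"
      using exp_ad_v_image[OF assms(1)] by simp
    show "\<forall>f\<in>gwa_carrier. coeff0_cong h0 a f (gwa_exp_ad h0 a lam (gwa_v j) f)"
      by (auto simp: gwa_exp_ad_gwa_v coeff0_cong_def intro: exp_ad_v_coeff0)
  qed
  have "gwa_theta w f 0 = f 0" for w :: 'k and f
    by (simp add: gwa_theta_def)
  then have theta: "coeff0_cong h0 a f (gwa_theta w f)" for w f
    by (simp add: coeff0_cong_def)
  from assms(2) show ?thesis
    unfolding gwa_generators_def gwa_pow_gwa_x gwa_pow_gwa_y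
    using exp gwa_theta_image theta by blast
qed

lemma gwa_G_preserves_coeff0_cong:
  fixes a :: "'k::field_char_0 poly"
  assumes "a \<noteq> 0" "g \<in> gwa_G h0 a" "f \<in> gwa_carrier"
  shows "coeff0_cong h0 a f (g f)"
  using gen_group_invariant[OF equivp_coeff0_cong gwa_generators_preserve_coeff0_cong[OF assms(1)]] assms(2,3)
  unfolding gwa_G_def by blast

lemma degree_eq_0_if_gwa_sig_fixed:
  fixes r :: "'k::field_char_0 poly"
  assumes "h0 \<noteq> 0" "gwa_sig h0 1 r = r"
  shows "degree r = 0"
proof -
  have shift: "poly r (x + h0) = poly r x" for x
    using arg_cong[OF assms(2), of "\<lambda>p. poly p (x + h0)"] by (simp add: gwa_sig_def poly_pcompose)
  have roots: "poly (r - [:poly r 0:]) (of_nat k * h0) = 0" for k :: nat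
  proof (induction k)
    case (Suc k)
    have "poly r (of_nat (Suc k) * h0) = poly r (of_nat k * h0 + h0)"
      by (simp add: algebra_simps)
    also have "\<dots> = poly r (of_nat k * h0)" by (rule shift)
    finally show ?case using Suc by simp
  qed simp
  have "inj (\<lambda>k::nat. of_nat k * h0)" using assms(1) by (auto intro: injI)
  then have "infinite (range (\<lambda>k::nat. of_nat k * h0))" by (rule range_inj_infinite)
  moreover have "range (\<lambda>k::nat. of_nat k * h0) \<subseteq> {x. poly (r - [:poly r 0:]) x = 0}"
    using roots by auto
  ultimately have "infinite {x. poly (r - [:poly r 0:]) x = 0}" by (rule infinite_super[rotated])
  then have "r - [:poly r 0:] = 0" using poly_roots_finite by blast
  then show ?thesis by (metis degree_pCons_0 right_minus_eq)
qed

lemma degree_le_2_if_degree_gwa_sig_diff_le_1: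
  fixes q :: "'k::field_char_0 poly"
  assumes "h0 \<noteq> 0" "degree (gwa_sig h0 1 q - q) \<le> 1"
  shows "degree q \<le> 2"
proof -
  have "pderiv (pderiv (gwa_sig h0 1 q - q)) = 0"
    using assms(2) by (simp add: pderiv_eq_0_iff degree_pderiv)
  then have "gwa_sig h0 1 (pderiv (pderiv q)) = pderiv (pderiv q)"
    by (simp add: pderiv_diff pderiv_gwa_sig)
  then have "degree (pderiv (pderiv q)) = 0"
    by (rule degree_eq_0_if_gwa_sig_fixed[OF assms(1)])
  then show ?thesis by (simp add: degree_pderiv)
qed

lemma coboundary_eq_0_if_degree_le_1:
  fixes a :: "'k::field_char_0 poly"
  assumes "h0 \<noteq> 0" "degree a > 2" "p \<in> coboundaries h0 a" "degree p \<le> 1"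
  shows "p = 0"
proof -
  obtain q where q: "a dvd q" "p = gwa_sig h0 1 q - q"
    using assms(3) by (auto simp: coboundaries_def)
  then have "degree q \<le> 2"
    using degree_le_2_if_degree_gwa_sig_diff_le_1[OF assms(1)] assms(4) by blast
  have "q = 0"
  proof (rule ccontr)
    assume "q \<noteq> 0"
    with dvd_imp_degree_le[OF q(1)] have "degree a \<le> degree q" .
    with assms(2) \<open>degree q \<le> 2\<close> show False by simp
  qed
  then show ?thesis using q(2) by simp
qed

theorem mainTheorem7:
  fixes h0 \<rho> :: "'k::field_char_0" and a :: "'k poly" and \<Omega> :: "(int \<Rightarrow> 'k poly) \<Rightarrow> (int \<Rightarrow> 'k poly)"
  assumes "h0 \<noteq> 0"
    and "degree a > 2"
    and "pcompose a [:\<rho>, -1:] = smult ((-1) ^ degree a) a"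
    and "\<Omega> \<in> gwa_aut h0 a"
    and "\<Omega> gwa_x = gwa_y"
    and "\<Omega> gwa_y = gwa_smult ((-1) ^ degree a) gwa_x"
    and "\<Omega> gwa_h = gwa_poly [:h0 + \<rho>, -1:]"
  shows "\<not> (\<exists>g\<in>gwa_G h0 a. \<forall>f\<in>gwa_carrier. \<Omega> f = g f)"
proof
  assume "\<exists>g\<in>gwa_G h0 a. \<forall>f\<in>gwa_carrier. \<Omega> f = g f"
  then obtain g where g: "g \<in> gwa_G h0 a" and \<Omega>_eq: "\<forall>f\<in>gwa_carrier. \<Omega> f = g f" by blast
  have "a \<noteq> 0" using assms(2) by auto
  have h: "gwa_h \<in> gwa_carrier"
    by (simp add: gwa_carrier_def gwa_h_def gwa_poly_def)
  have "g gwa_h = gwa_poly [:h0 + \<rho>, -1:]" using \<Omega>_eq h assms(7) by force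
  with gwa_G_preserves_coeff0_cong[OF \<open>a \<noteq> 0\<close> g h]
  have "[:h0 + \<rho>, -2:] \<in> coboundaries h0 a"
    by (simp add: coeff0_cong_def gwa_poly_def gwa_h_def)
  then have "[:h0 + \<rho>, -2:] = 0"
    by (rule coboundary_eq_0_if_degree_le_1[OF assms(1,2)]) simp
  then show False by simp
qed

end
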